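(* For any hypergraph $H$, $\pi(S(H))\le\pi(H)$.
   Context: A hypergraph $H=(V,E)$ has finite vertex set $V$ and edge set $E\subseteq 2^V$; $R(H)=\{|F|:F\in E\}$. $H_1\subseteq H_2$ means there is an injective $f\colon V(H_1)\to V(H_2)$ with $f(F)\in E(H_2)$ for all $F\in E(H_1)$. For $G$ on $n$ vertices, $h_n(G)=\sum_{F\in E(G)}1/\binom{n}{|F|}$; $\pi_n(H)=\max\{h_n(G): G\text{ on } n \text{ vertices}, R(G)\subseteq R(H), H\not\subseteq G\}$ and $\pi(H)=\lim_n\pi_n(H)$. The suspension $S(H)$ has vertex set $V(H)\cup\{\ast\}$ for a new vertex $\ast$ and edge set $\{F\cup\{\ast\}: F\in E(H)\}$. *)

theory Defs
  imports Complex_Main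
begin

type_synonym 'a hgraph = "'a set \<times> 'a set set"

definition hypergraph :: "'a hgraph \<Rightarrow> bool" where
  "hypergraph H \<longleftrightarrow> finite (fst H) \<and> snd H \<subseteq> Pow (fst H)"

definition edge_sizes :: "'a hgraph \<Rightarrow> nat set" where
  "edge_sizes H = card ` snd H"

definition hcontained :: "'a hgraph \<Rightarrow> 'b hgraph \<Rightarrow> bool" where
  "hcontained H1 H2 \<longleftrightarrow>
     (\<exists>f. inj_on f (fst H1) \<and> f ` fst H1 \<subseteq> fst H2 \<and> (\<forall>F\<in>snd H1. f ` F \<in> snd H2))"

definition hlag :: "nat \<Rightarrow> 'a hgraph \<Rightarrow> real" where
  "hlag n G = (\<Sum>F\<in>snd G. 1 / real (n choose card F))"

text \<open>Hypergraphs on n vertices are taken (up to isomorphism) on the vertex set {0..<n}.\<close>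
definition pi_n :: "'a hgraph \<Rightarrow> nat \<Rightarrow> real" where
  "pi_n H n = Sup {hlag n G | G :: nat hgraph.
      hypergraph G \<and> fst G = {..<n} \<and> edge_sizes G \<subseteq> edge_sizes H \<and> \<not> hcontained H G}"

definition pi_lim :: "'a hgraph \<Rightarrow> real" where
  "pi_lim H = lim (\<lambda>n. pi_n H n)"

definition suspension :: "'a hgraph \<Rightarrow> 'a option hgraph" where
  "suspension H = (insert None (Some ` fst H), (\<lambda>F. insert None (Some ` F)) ` snd H)"

end

theory Submission
  imports Defs
begin

text \<open>
  A graph G on n + 1 vertices with no copy of the suspension S(H) has, for every vertex v, a link
  G_v on the remaining n vertices that contains no copy of H; its edge sizes lie in R(H) because
  R(S(H)) = R(H) + 1. Counting pairs (v, F) with v \<in> F \<in> E(G) shows that the average of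
  h_n(G_v) over all v equals h_(n+1)(G), so h_(n+1)(G) \<le> \<pi>_n(H) and hence
  \<pi>_(n+1)(S(H)) \<le> \<pi>_n(H). The same double counting with vertex deletions instead of links
  shows that \<pi>_n(H) is eventually non-increasing, so both limits exist.
\<close>

lemma hcontained_trans:
  assumes "hcontained H1 H2" "hcontained H2 H3"
  shows "hcontained H1 H3"
proof -
  obtain f where f: "inj_on f (fst H1)" "f ` fst H1 \<subseteq> fst H2" "\<forall>F\<in>snd H1. f ` F \<in> snd H2"
    using assms(1) unfolding hcontained_def by blast
  obtain g where g: "inj_on g (fst H2)" "g ` fst H2 \<subseteq> fst H3" "\<forall>F\<in>snd H2. g ` F \<in> snd H3"
    using assms(2) unfolding hcontained_def by blast
  have "inj_on (g \<circ> f) (fst H1)"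
    using f(1,2) g(1) by (blast intro: comp_inj_on inj_on_subset)
  moreover have "(g \<circ> f) ` fst H1 \<subseteq> fst H3"
    using f(2) g(2) by (auto simp: image_comp[symmetric])
  moreover have "\<forall>F\<in>snd H1. (g \<circ> f) ` F \<in> snd H3"
    using f(3) g(3) by (metis image_comp)
  ultimately show ?thesis
    unfolding hcontained_def by blast
qed

definition hgraph_image :: "('a \<Rightarrow> 'b) \<Rightarrow> 'a hgraph \<Rightarrow> 'b hgraph" where
  "hgraph_image h G = (h ` fst G, (`) h ` snd G)"

lemma hypergraph_hgraph_image: "hypergraph G \<Longrightarrow> hypergraph (hgraph_image h G)"
  unfolding hypergraph_def hgraph_image_def by auto

lemma
  assumes "hypergraph G" "inj_on h (fst G)"
  shows edge_sizes_hgraph_image: "edge_sizes (hgraph_image h G) = edge_sizes G"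
    and hlag_hgraph_image: "hlag n (hgraph_image h G) = hlag n G"
proof -
  have sub: "snd G \<subseteq> Pow (fst G)"
    using assms(1) unfolding hypergraph_def by simp
  have card_eq: "card (h ` F) = card F" if "F \<in> snd G" for F
    using sub that by (intro card_image inj_on_subset[OF assms(2)]) auto
  have "inj_on ((`) h) (snd G)"
    using sub by (intro inj_on_image inj_on_subset[OF assms(2)]) auto
  then show "hlag n (hgraph_image h G) = hlag n G"
    unfolding hlag_def hgraph_image_def by (simp add: sum.reindex card_eq)
  show "edge_sizes (hgraph_image h G) = edge_sizes G"
    unfolding edge_sizes_def hgraph_image_def by (simp add: image_image card_eq cong: image_cong)
qed

lemma hcontained_hgraph_image:
  assumes "hypergraph G" "inj_on h (fst G)"
  shows "hcontained (hgraph_image h G) G"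
  unfolding hcontained_def hgraph_image_def
proof (intro exI conjI ballI)
  show "inj_on (inv_into (fst G) h) (fst (h ` fst G, (`) h ` snd G))"
    by (simp add: inj_on_inv_into)
  show "inv_into (fst G) h ` fst (h ` fst G, (`) h ` snd G) \<subseteq> fst G"
    by (auto intro: inv_into_into)
  fix F' assume "F' \<in> snd (h ` fst G, (`) h ` snd G)"
  then obtain F where "F \<in> snd G" "F' = h ` F"
    by auto
  moreover have "F \<subseteq> fst G"
    using assms(1) \<open>F \<in> snd G\<close> unfolding hypergraph_def by auto
  ultimately show "inv_into (fst G) h ` F' \<in> snd G"
    using inv_into_image_cancel[OF assms(2)] by simp
qed

lemma finite_hlag_hypergraphs:
  "finite {hlag n G | G :: nat hgraph. hypergraph G \<and> fst G = {..<n} \<and> P G}"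
proof (rule finite_subset)
  show "{hlag n G | G :: nat hgraph. hypergraph G \<and> fst G = {..<n} \<and> P G}
      \<subseteq> hlag n ` ({{..<n}} \<times> Pow (Pow {..<n}))"
    unfolding hypergraph_def by (auto simp: image_iff)
qed simp

text \<open>
  pi_n only ranges over graphs on the vertex set {..<n}; relabelling extends its bound to graphs
  on any n-element vertex set.
\<close>
lemma hlag_le_pi_n:
  fixes G :: "'b hgraph"
  assumes "hypergraph G" "card (fst G) = n" "edge_sizes G \<subseteq> edge_sizes H" "\<not> hcontained H G"
  shows "hlag n G \<le> pi_n H n"
proof -
  obtain h where h: "bij_betw h (fst G) {..<n}"
    using ex_bij_betw_finite_nat[of "fst G"] assms(1,2) by (auto simp: hypergraph_def atLeast0LessThan)
  define G' where "G' = hgraph_image h G"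
  have inj: "inj_on h (fst G)"
    using h by (rule bij_betw_imp_inj_on)
  have "hypergraph G'" "fst G' = {..<n}"
    using assms(1) h hypergraph_hgraph_image[of G h] by (simp_all add: G'_def hgraph_image_def bij_betw_def)
  moreover have "edge_sizes G' \<subseteq> edge_sizes H"
    using assms(1,3) inj by (simp add: G'_def edge_sizes_hgraph_image)
  moreover have "\<not> hcontained H G'"
    using assms(4) hcontained_trans[OF _ hcontained_hgraph_image[OF assms(1) inj]]
    unfolding G'_def by (rule contrapos_nn)
  ultimately have "hlag n G' \<le> pi_n H n"
    unfolding pi_n_def by (intro cSup_upper bdd_above_finite finite_hlag_hypergraphs) blast
  then show ?thesis
    using assms(1) inj by (simp add: G'_def hlag_hgraph_image)
qed

lemma not_hcontained_edgeless: "snd H \<noteq> {} \<Longrightarrow> \<not> hcontained H (V, {})"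
  unfolding hcontained_def by auto

lemma pi_n_le:
  assumes "snd H \<noteq> {}"
    and "\<And>G. hypergraph G \<Longrightarrow> fst G = {..<n} \<Longrightarrow> edge_sizes G \<subseteq> edge_sizes H \<Longrightarrow>
            \<not> hcontained H G \<Longrightarrow> hlag n G \<le> z"
  shows "pi_n H n \<le> z"
  unfolding pi_n_def
proof (rule cSup_least)
  have "hlag n ({..<n}, {}) \<in> {hlag n G | G :: nat hgraph.
      hypergraph G \<and> fst G = {..<n} \<and> edge_sizes G \<subseteq> edge_sizes H \<and> \<not> hcontained H G}"
    using not_hcontained_edgeless[OF assms(1)] by (auto simp: hypergraph_def edge_sizes_def)
  then show "{hlag n G | G :: nat hgraph.
      hypergraph G \<and> fst G = {..<n} \<and> edge_sizes G \<subseteq> edge_sizes H \<and> \<not> hcontained H G} \<noteq> {}"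
    by blast
qed (use assms(2) in blast)

lemma pi_n_nonneg:
  assumes "snd H \<noteq> {}"
  shows "0 \<le> pi_n H n"
proof -
  have "hlag n ({..<n}, {}) \<le> pi_n H n"
    using assms by (intro hlag_le_pi_n) (auto simp: hypergraph_def edge_sizes_def not_hcontained_edgeless)
  then show ?thesis
    by (simp add: hlag_def)
qed

text \<open>
  Without edges H embeds into every graph with enough vertices, so the defining set is empty
  and pi_n takes the junk value Sup {}.
\<close>
lemma pi_n_edgeless:
  assumes "hypergraph H" "snd H = {}" "card (fst H) \<le> n"
  shows "pi_n H n = Sup {}"
proof -
  have "hcontained H G" if "fst G = {..<n}" for G :: "nat hgraph"
  proof -
    obtain f where "inj_on f (fst H)" "f ` fst H \<subseteq> {..<n}"
      using card_le_inj[of "fst H" "{..<n}"] assms(1,3) by (auto simp: hypergraph_def)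
    then show ?thesis
      unfolding hcontained_def using assms(2) that by auto
  qed
  then show ?thesis
    unfolding pi_n_def by auto
qed

subsection \<open>Vertex deletions and links\<close>

definition vertex_deletion :: "'a \<Rightarrow> 'a hgraph \<Rightarrow> 'a hgraph" where
  "vertex_deletion v G = (fst G - {v}, {F \<in> snd G. v \<notin> F})"

definition vertex_link :: "'a \<Rightarrow> 'a hgraph \<Rightarrow> 'a hgraph" where
  "vertex_link v G = (fst G - {v}, (\<lambda>F. F - {v}) ` {F \<in> snd G. v \<in> F})"

lemma hypergraph_vertex_deletion: "hypergraph G \<Longrightarrow> hypergraph (vertex_deletion v G)"
  unfolding hypergraph_def vertex_deletion_def by auto

lemma hypergraph_vertex_link: "hypergraph G \<Longrightarrow> hypergraph (vertex_link v G)"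
  unfolding hypergraph_def vertex_link_def by auto

lemma edge_sizes_vertex_deletion: "edge_sizes (vertex_deletion v G) \<subseteq> edge_sizes G"
  unfolding edge_sizes_def vertex_deletion_def by auto

lemma hcontained_vertex_deletion: "hcontained (vertex_deletion v G) G"
  unfolding hcontained_def vertex_deletion_def by (intro exI[of _ id]) auto

lemma hcontained_suspension_if_link:
  assumes "v \<in> fst G" "hcontained H (vertex_link v G)"
  shows "hcontained (suspension H) G"
proof -
  obtain f where f: "inj_on f (fst H)" "f ` fst H \<subseteq> fst G - {v}"
    "\<forall>A\<in>snd H. f ` A \<in> (\<lambda>F. F - {v}) ` {F \<in> snd G. v \<in> F}"
    using assms(2) unfolding hcontained_def vertex_link_def by auto
  define g where "g x = (case x of None \<Rightarrow> v | Some a \<Rightarrow> f a)" for x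
  have "inj_on g (insert None (Some ` fst H))"
    using f(1,2) unfolding g_def inj_on_def by (auto split: option.splits)
  moreover have "g ` insert None (Some ` fst H) \<subseteq> fst G"
    using f(2) assms(1) unfolding g_def by auto
  moreover have "g ` insert None (Some ` A) \<in> snd G" if "A \<in> snd H" for A
  proof -
    obtain F where F: "F \<in> snd G" "v \<in> F" "f ` A = F - {v}"
      using f(3) \<open>A \<in> snd H\<close> by auto
    have "g ` insert None (Some ` A) = insert v (f ` A)"
      unfolding g_def by (auto simp: image_image)
    also have "\<dots> = F"
      using F by auto
    finally show ?thesis
      using F(1) by simp
  qed
  ultimately show ?thesis
    unfolding hcontained_def suspension_def by auto
qed

lemma hypergraph_suspension: "hypergraph H \<Longrightarrow> hypergraph (suspension H)"
  unfolding hypergraph_def suspension_def by auto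

lemma edge_sizes_suspension:
  assumes "hypergraph H"
  shows "edge_sizes (suspension H) = Suc ` edge_sizes H"
proof -
  have "card (insert None (Some ` A)) = Suc (card A)" if "A \<in> snd H" for A
    using assms that by (auto simp: hypergraph_def card_image finite_subset)
  then show ?thesis
    unfolding edge_sizes_def suspension_def by (auto simp: image_image cong: image_cong)
qed

lemma edge_sizes_vertex_link:
  assumes "hypergraph G"
  shows "edge_sizes (vertex_link v G) \<subseteq> (\<lambda>k. k - 1) ` edge_sizes G"
  using assms unfolding edge_sizes_def vertex_link_def hypergraph_def
  by (auto intro!: imageI simp: card_Diff_singleton intro: finite_subset)

subsection \<open>Double counting\<close>

lemma diff_div_choose_eq_Suc_div_choose:
  assumes "k \<le> n"
  shows "real (Suc n - k) / real (n choose k) = real (Suc n) / real (Suc n choose k)"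
proof -
  have "real (Suc n - k) * real (Suc n choose k) = real (Suc n) * real (n choose k)"
    using binomial_absorb_comp[of "Suc n" k] by (metis diff_Suc_1 of_nat_mult)
  moreover have "0 < n choose k" "0 < Suc n choose k"
    using assms by auto
  ultimately show ?thesis
    by (simp add: frac_eq_eq)
qed

lemma div_choose_pred_eq_Suc_div_choose:
  assumes "1 \<le> k" "k \<le> Suc n"
  shows "real k / real (n choose (k - 1)) = real (Suc n) / real (Suc n choose k)"
proof -
  obtain j where j: "k = Suc j"
    using assms(1) by (cases k) auto
  have "real k * real (Suc n choose k) = real (Suc n) * real (n choose (k - 1))"
    using Suc_times_binomial[of j n] j by (metis diff_Suc_1 of_nat_mult)
  moreover have "0 < n choose (k - 1)" "0 < Suc n choose k"
    using assms j by auto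
  ultimately show ?thesis
    by (simp add: frac_eq_eq)
qed

lemma sum_hlag_vertex_deletion:
  assumes "hypergraph G" "card (fst G) = Suc n" "\<forall>F\<in>snd G. card F \<le> n"
  shows "(\<Sum>v\<in>fst G. hlag n (vertex_deletion v G)) = Suc n * hlag (Suc n) G"
proof -
  let ?V = "fst G" and ?E = "snd G"
  have fin: "finite ?V" "finite ?E" "?E \<subseteq> Pow ?V"
    using assms(1) unfolding hypergraph_def by (auto intro: finite_subset)
  have "(\<Sum>v\<in>?V. hlag n (vertex_deletion v G)) = (\<Sum>v\<in>?V. \<Sum>F\<in>{F \<in> ?E. v \<notin> F}. 1 / real (n choose card F))"
    by (simp add: hlag_def vertex_deletion_def)
  also have "\<dots> = (\<Sum>F\<in>?E. \<Sum>v\<in>{v \<in> ?V. v \<notin> F}. 1 / real (n choose card F))"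
    using fin by (intro sum.swap_restrict) auto
  also have "\<dots> = (\<Sum>F\<in>?E. real (Suc n) / real (Suc n choose card F))"
  proof (rule sum.cong[OF refl])
    fix F assume F: "F \<in> ?E"
    have "F \<subseteq> ?V"
      using F fin by auto
    then have "card {v \<in> ?V. v \<notin> F} = Suc n - card F"
      using fin(1) assms(2) by (simp add: set_diff_eq[symmetric] card_Diff_subset finite_subset)
    then show "(\<Sum>v\<in>{v \<in> ?V. v \<notin> F}. 1 / real (n choose card F)) = real (Suc n) / real (Suc n choose card F)"
      using diff_div_choose_eq_Suc_div_choose[of "card F" n] assms(3) F by simp
  qed
  also have "\<dots> = Suc n * hlag (Suc n) G"
    by (simp add: hlag_def sum_distrib_left)
  finally show ?thesis .
qed

lemma hlag_vertex_link:
  assumes "hypergraph G"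
  shows "hlag n (vertex_link v G) = (\<Sum>F\<in>{F \<in> snd G. v \<in> F}. 1 / real (n choose (card F - 1)))"
proof -
  have "inj_on (\<lambda>F. F - {v}) {F \<in> snd G. v \<in> F}"
    by (rule inj_onI) (metis (no_types, lifting) insert_Diff mem_Collect_eq)
  moreover have "card (F - {v}) = card F - 1" if "F \<in> snd G" "v \<in> F" for F
    using assms that by (auto simp: hypergraph_def card_Diff_singleton intro: finite_subset)
  ultimately show ?thesis
    unfolding hlag_def vertex_link_def by (simp add: sum.reindex)
qed

lemma sum_hlag_vertex_link:
  assumes "hypergraph G" "card (fst G) = Suc n" "{} \<notin> snd G"
  shows "(\<Sum>v\<in>fst G. hlag n (vertex_link v G)) = Suc n * hlag (Suc n) G"
proof -
  let ?V = "fst G" and ?E = "snd G"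
  have fin: "finite ?V" "finite ?E" "?E \<subseteq> Pow ?V"
    using assms(1) unfolding hypergraph_def by (auto intro: finite_subset)
  have "(\<Sum>v\<in>?V. hlag n (vertex_link v G)) = (\<Sum>v\<in>?V. \<Sum>F\<in>{F \<in> ?E. v \<in> F}. 1 / real (n choose (card F - 1)))"
    using assms(1) by (simp add: hlag_vertex_link)
  also have "\<dots> = (\<Sum>F\<in>?E. \<Sum>v\<in>{v \<in> ?V. v \<in> F}. 1 / real (n choose (card F - 1)))"
    using fin by (intro sum.swap_restrict) auto
  also have "\<dots> = (\<Sum>F\<in>?E. real (Suc n) / real (Suc n choose card F))"
  proof (rule sum.cong[OF refl])
    fix F assume F: "F \<in> ?E"
    have "{v \<in> ?V. v \<in> F} = F"
      using F fin by auto
    moreover have "1 \<le> card F" "card F \<le> Suc n"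
      using F fin assms(2,3) card_mono[of "fst G" F] by (auto simp: Suc_le_eq card_gt_0_iff intro: rev_finite_subset)
    ultimately show "(\<Sum>v\<in>{v \<in> ?V. v \<in> F}. 1 / real (n choose (card F - 1))) = real (Suc n) / real (Suc n choose card F)"
      using div_choose_pred_eq_Suc_div_choose[of "card F" n] by simp
  qed
  also have "\<dots> = Suc n * hlag (Suc n) G"
    by (simp add: hlag_def sum_distrib_left)
  finally show ?thesis .
qed

lemma edge_sizes_le_card:
  assumes "hypergraph H" "k \<in> edge_sizes H"
  shows "k \<le> card (fst H)"
  using assms unfolding hypergraph_def edge_sizes_def by (auto intro: card_mono)

lemma le_pi_n_if_average:
  fixes K :: "'v \<Rightarrow> 'b hgraph" and h :: real
  assumes "(\<Sum>v\<in>V. hlag n (K v)) = Suc n * h" "card V = Suc n"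
    and "\<And>v. v \<in> V \<Longrightarrow> hypergraph (K v)" "\<And>v. v \<in> V \<Longrightarrow> card (fst (K v)) = n"
    and "\<And>v. v \<in> V \<Longrightarrow> edge_sizes (K v) \<subseteq> edge_sizes H"
    and "\<And>v. v \<in> V \<Longrightarrow> \<not> hcontained H (K v)"
  shows "h \<le> pi_n H n"
proof -
  have "(\<Sum>v\<in>V. hlag n (K v)) \<le> (\<Sum>v\<in>V. pi_n H n)"
    using assms(3-6) by (intro sum_mono hlag_le_pi_n)
  then show ?thesis
    using assms(1,2) by (simp add: mult_le_cancel_left_pos)
qed

lemma pi_n_Suc_le:
  assumes "hypergraph H" "snd H \<noteq> {}" "card (fst H) \<le> n"
  shows "pi_n H (Suc n) \<le> pi_n H n"
proof (rule pi_n_le[OF assms(2)])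
  fix G :: "nat hgraph"
  assume G: "hypergraph G" "fst G = {..<Suc n}" "edge_sizes G \<subseteq> edge_sizes H" "\<not> hcontained H G"
  have "card F \<le> n" if "F \<in> snd G" for F
  proof -
    have "card F \<in> edge_sizes H"
      using G(3) that unfolding edge_sizes_def by blast
    then show ?thesis
      using edge_sizes_le_card[OF assms(1)] assms(3) by fastforce
  qed
  then have "(\<Sum>v\<in>fst G. hlag n (vertex_deletion v G)) = Suc n * hlag (Suc n) G"
    using G(1,2) by (intro sum_hlag_vertex_deletion) auto
  then show "hlag (Suc n) G \<le> pi_n H n"
  proof (rule le_pi_n_if_average[OF _ _ hypergraph_vertex_deletion[OF G(1)]])
    fix v assume v: "v \<in> fst G"
    show "card (fst (vertex_deletion v G)) = n"
      using G(2) v by (simp add: vertex_deletion_def)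
    show "edge_sizes (vertex_deletion v G) \<subseteq> edge_sizes H"
      using edge_sizes_vertex_deletion G(3) by (rule order_trans)
    show "\<not> hcontained H (vertex_deletion v G)"
      using G(4) hcontained_trans[OF _ hcontained_vertex_deletion] by (rule contrapos_nn)
  qed (simp add: G(2))
qed

lemma pi_n_suspension_Suc_le_nonempty:
  assumes "hypergraph H" "snd H \<noteq> {}"
  shows "pi_n (suspension H) (Suc n) \<le> pi_n H n"
proof (rule pi_n_le)
  show "snd (suspension H) \<noteq> {}"
    using assms(2) by (simp add: suspension_def)
  fix G :: "nat hgraph"
  assume G: "hypergraph G" "fst G = {..<Suc n}" "edge_sizes G \<subseteq> edge_sizes (suspension H)"
    "\<not> hcontained (suspension H) G"
  have sizes: "edge_sizes G \<subseteq> Suc ` edge_sizes H"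
    using G(3) edge_sizes_suspension[OF assms(1)] by simp
  then have "{} \<notin> snd G"
    unfolding edge_sizes_def by force
  then have "(\<Sum>v\<in>fst G. hlag n (vertex_link v G)) = Suc n * hlag (Suc n) G"
    using G(1,2) by (intro sum_hlag_vertex_link) auto
  then show "hlag (Suc n) G \<le> pi_n H n"
  proof (rule le_pi_n_if_average[OF _ _ hypergraph_vertex_link[OF G(1)]])
    fix v assume v: "v \<in> fst G"
    show "card (fst (vertex_link v G)) = n"
      using G(2) v by (simp add: vertex_link_def)
    show "edge_sizes (vertex_link v G) \<subseteq> edge_sizes H"
      using edge_sizes_vertex_link[OF G(1), of v] sizes by fastforce
    show "\<not> hcontained H (vertex_link v G)"
      using G(4) hcontained_suspension_if_link[OF v] by (rule contrapos_nn)
  qed (simp add: G(2))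
qed

lemma pi_n_suspension_Suc_le:
  assumes "hypergraph H" "card (fst H) \<le> n"
  shows "pi_n (suspension H) (Suc n) \<le> pi_n H n"
proof (cases "snd H = {}")
  case True
  have "card (fst (suspension H)) \<le> Suc n"
    using assms by (simp add: hypergraph_def suspension_def card_image)
  moreover have "snd (suspension H) = {}"
    using True by (simp add: suspension_def)
  ultimately show ?thesis
    using pi_n_edgeless[OF assms(1) True assms(2)] pi_n_edgeless[OF hypergraph_suspension[OF assms(1)]]
    by simp
qed (use assms pi_n_suspension_Suc_le_nonempty in blast)

lemma convergent_pi_n:
  assumes "hypergraph H"
  shows "convergent (pi_n H)"
proof (cases "snd H = {}")
  case True
  have "\<forall>\<^sub>F n in sequentially. pi_n H n = Sup {}"
    using pi_n_edgeless[OF assms True] eventually_sequentially by blast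
  then have "pi_n H \<longlonglongrightarrow> Sup {}"
    by (rule tendsto_eventually)
  then show ?thesis
    by (rule convergentI)
next
  case False
  let ?M = "card (fst H)"
  have decreasing: "pi_n H n \<le> pi_n H m" if "?M \<le> m" "m \<le> n" for m n
    using that(2)
  proof (induction n rule: dec_induct)
    case (step k)
    then show ?case
      using pi_n_Suc_le[OF assms False, of k] that(1) by simp
  qed simp
  have "Bseq (\<lambda>n. pi_n H (n + ?M))"
    by (rule BseqI'[where K = "pi_n H ?M"]) (use decreasing pi_n_nonneg[OF False] in auto)
  then show ?thesis
    by (rule Bseq_monoseq_convergent'_dec) (use decreasing in auto)
qed

theorem mainTheorem17:
  fixes H :: "'a hgraph"
  assumes "hypergraph H"
  shows "pi_lim (suspension H) \<le> pi_lim H"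
proof -
  have "pi_n H \<longlonglongrightarrow> pi_lim H"
    using convergent_pi_n[OF assms] by (simp add: pi_lim_def convergent_LIMSEQ_iff)
  moreover have "(\<lambda>n. pi_n (suspension H) (Suc n)) \<longlonglongrightarrow> pi_lim (suspension H)"
    using convergent_pi_n[OF hypergraph_suspension[OF assms]]
    by (simp add: pi_lim_def convergent_LIMSEQ_iff LIMSEQ_Suc)
  moreover have "\<forall>\<^sub>F n in sequentially. pi_n (suspension H) (Suc n) \<le> pi_n H n"
    using pi_n_suspension_Suc_le[OF assms] eventually_sequentially by blast
  ultimately show ?thesis
    by (rule tendsto_le[OF sequentially_bot])
qed

end
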